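(* In the two-period setting of the context: (i) if $\frac{\hat\ell_n^P}{E_n}+\frac12\ge\frac{\hat\ell^P}{E}$ for all $n$, then for every $\alpha\in[0,1]$ the aggregate peak load at a Nash equilibrium of $\mathcal G^{\mathrm{DP}}_\alpha$ is $\ell^P=\frac E2+\alpha\frac{\hat\ell^P-\hat\ell^O}{2}$; (ii) if $2(N-1)\hat\ell_n^P\ge(\hat\ell^P-\hat\ell^O)-E_n$ for all $n$, then for every $\alpha\in[0,1]$ the aggregate peak load at the Nash equilibrium of $\mathcal G^{\mathrm{HP}}_\alpha$ is $\ell^P=\frac E2+\phi(\alpha)\frac{\hat\ell^P-\hat\ell^O}{2}$, where $\phi(\alpha)=\frac{2\alpha}{(1+\alpha)+(1-\alpha)N}$.
   Context: Two-period setting: users $\mathcal N=\{1,\dots,N\}$, periods $\mathcal H=\{P,O\}$. Each user $n$ has energy demand $E_n>0$ and preferred profile $(\hat\ell_n^P,\hat\ell_n^O)$ with $\hat\ell_n^h\ge0$, $\hat\ell_n^P+\hat\ell_n^O=E_n$; $E=\sum_nE_n$, $\hat\ell^h=\sum_n\hat\ell_n^h$, and $\hat\ell^P\ge\frac E2\ge\hat\ell^O$. Feasible set $\mathcal L_n=\{(\ell_n^P,\ell_n^O):\ell_n^P+\ell_n^O=E_n,\ \ell_n^P,\ell_n^O\ge0\}$; $\ell^h=\sum_n\ell_n^h$. Costs $C_h(x)=x^2$, utilities $u_n(\boldsymbol\ell_n)=-\sum_h(\ell_n^h-\hat\ell_n^h)^2$. DP bill $b_n^{\mathrm{DP}}=\frac{E_n}{E}((\ell^P)^2+(\ell^O)^2)$;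 HP bill $b_n^{\mathrm{HP}}=\sum_h\ell_n^h\ell^h$. In $\mathcal G^{\mathrm{DP}}_\alpha$ (resp. $\mathcal G^{\mathrm{HP}}_\alpha$) user $n$ minimizes $f_n^\alpha=(1-\alpha)b_n-\alpha u_n(\boldsymbol\ell_n)$ over $\mathcal L_n$ with the corresponding bill; Nash equilibria are defined as usual. *)

theory Defs
  imports Complex_Main
begin

text \<open>Users are 1..N. A load profile assigns to each user n a pair
  (peak load, off-peak load). Preferred profiles are given by lhat.\<close>

type_synonym profile = "nat \<Rightarrow> real \<times> real"

definition total_energy :: "nat \<Rightarrow> (nat \<Rightarrow> real) \<Rightarrow> real" where
  "total_energy N E = (\<Sum>n\<in>{1..N}. E n)"

definition loadP :: "nat \<Rightarrow> profile \<Rightarrow> real" where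
  "loadP N l = (\<Sum>n\<in>{1..N}. fst (l n))"

definition loadO :: "nat \<Rightarrow> profile \<Rightarrow> real" where
  "loadO N l = (\<Sum>n\<in>{1..N}. snd (l n))"

definition feasible :: "(nat \<Rightarrow> real) \<Rightarrow> nat \<Rightarrow> real \<times> real \<Rightarrow> bool" where
  "feasible E n x \<longleftrightarrow> fst x + snd x = E n \<and> fst x \<ge> 0 \<and> snd x \<ge> 0"

definition utility :: "profile \<Rightarrow> nat \<Rightarrow> real \<times> real \<Rightarrow> real" where
  "utility lhat n x = - ((fst x - fst (lhat n))\<^sup>2 + (snd x - snd (lhat n))\<^sup>2)"

text \<open>Daily-proportional bill and hourly-proportional bill (C_h(x) = x^2).\<close>
definition bill_DP :: "nat \<Rightarrow> (nat \<Rightarrow> real) \<Rightarrow> profile \<Rightarrow> nat \<Rightarrow> real" where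
  "bill_DP N E l n = E n / total_energy N E * ((loadP N l)\<^sup>2 + (loadO N l)\<^sup>2)"

definition bill_HP :: "nat \<Rightarrow> profile \<Rightarrow> nat \<Rightarrow> real" where
  "bill_HP N l n = fst (l n) * loadP N l + snd (l n) * loadO N l"

definition cost_DP :: "real \<Rightarrow> nat \<Rightarrow> (nat \<Rightarrow> real) \<Rightarrow> profile \<Rightarrow> profile \<Rightarrow> nat \<Rightarrow> real" where
  "cost_DP \<alpha> N E lhat l n = (1 - \<alpha>) * bill_DP N E l n - \<alpha> * utility lhat n (l n)"

definition cost_HP :: "real \<Rightarrow> nat \<Rightarrow> profile \<Rightarrow> profile \<Rightarrow> nat \<Rightarrow> real" where
  "cost_HP \<alpha> N lhat l n = (1 - \<alpha>) * bill_HP N l n - \<alpha> * utility lhat n (l n)"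

definition is_NE :: "(profile \<Rightarrow> nat \<Rightarrow> real) \<Rightarrow> nat \<Rightarrow> (nat \<Rightarrow> real) \<Rightarrow> profile \<Rightarrow> bool" where
  "is_NE cost N E l \<longleftrightarrow>
     (\<forall>n\<in>{1..N}. feasible E n (l n)) \<and>
     (\<forall>n\<in>{1..N}. \<forall>x. feasible E n x \<longrightarrow> cost l n \<le> cost (l(n := x)) n)"

definition phi :: "nat \<Rightarrow> real \<Rightarrow> real" where
  "phi N \<alpha> = 2 * \<alpha> / ((1 + \<alpha>) + (1 - \<alpha>) * real N)"

end

(*
  Moving d units of a user's energy from the off-peak into the peak period changes its cost
  by D * d + K * d^2 with K > 0, so at a Nash equilibrium the slope D obeys the
  Karush-Kuhn-Tucker sign conditions. In both games D is an increasing affine function of the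
  user's own peak load and of the aggregate peak load, and it vanishes at an explicit candidate
  profile u whose peak loads add up to the claimed aggregate; the hypotheses on the preferred
  profiles are exactly what makes u feasible. Comparing an equilibrium with u user by user
  forces both to have the same aggregate peak load.
*)
theory Submission
  imports Defs
begin

lemma loadP_fun_upd:
  assumes "n \<in> {1..N}"
  shows "loadP N (l(n := p)) = loadP N l - fst (l n) + fst p"
proof -
  have "loadP N (l(n := p)) = (\<Sum>i\<in>{1..N}. fst (l i) + (if i = n then fst p - fst (l n) else 0))"
    unfolding loadP_def by (rule sum.cong) auto
  also have "\<dots> = loadP N l + (fst p - fst (l n))"
    unfolding loadP_def sum.distrib using assms by simp
  finally show ?thesis by simp
qed

lemma loadO_fun_upd:
  assumes "n \<in> {1..N}"
  shows "loadO N (l(n := p)) = loadO N l - snd (l n) + snd p"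
proof -
  have "loadO N (l(n := p)) = (\<Sum>i\<in>{1..N}. snd (l i) + (if i = n then snd p - snd (l n) else 0))"
    unfolding loadO_def by (rule sum.cong) auto
  also have "\<dots> = loadO N l + (snd p - snd (l n))"
    unfolding loadO_def sum.distrib using assms by simp
  finally show ?thesis by simp
qed

lemma loadO_eq_total_energy_minus_loadP:
  assumes "\<forall>n\<in>{1..N}. feasible E n (l n)"
  shows "loadO N l = total_energy N E - loadP N l"
proof -
  have "total_energy N E = (\<Sum>i\<in>{1..N}. fst (l i) + snd (l i))"
    unfolding total_energy_def using assms by (intro sum.cong) (auto simp: feasible_def)
  then show ?thesis unfolding loadO_def loadP_def sum.distrib by simp
qed

lemma total_energy_pos:
  assumes "1 \<le> N" "\<forall>n\<in>{1..N}. 0 < E n"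
  shows "0 < total_energy N E"
  unfolding total_energy_def using assms by (intro sum_pos) auto

lemma slope_nonpos_if_min_from_left:
  fixes D K s :: real
  assumes K: "0 < K" and s: "0 < s"
    and min: "\<And>d. - s \<le> d \<Longrightarrow> d \<le> 0 \<Longrightarrow> 0 \<le> D * d + K * d\<^sup>2"
  shows "D \<le> 0"
proof (rule ccontr)
  assume "\<not> D \<le> 0"
  define t where "t = min s (D / (2 * K))"
  have t: "0 < t" "t \<le> s" using s K \<open>\<not> D \<le> 0\<close> by (auto simp: t_def)
  have "K * t \<le> D / 2" using K by (auto simp: t_def min_def field_simps)
  then have "K * t\<^sup>2 \<le> D / 2 * t" using t by (simp add: power2_eq_square mult_right_mono algebra_simps)
  then have "D * (- t) + K * (- t)\<^sup>2 < 0" using t \<open>\<not> D \<le> 0\<close> by (simp add: power2_eq_square)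
  with min[of "- t"] t show False by simp
qed

lemma is_NE_first_order:
  assumes NE: "is_NE cost N E l" and n: "n \<in> {1..N}" and K: "0 < K"
    and shift: "\<And>d. cost (l(n := (fst (l n) + d, snd (l n) - d))) n - cost l n = D * d + K * d\<^sup>2"
  shows "0 < fst (l n) \<Longrightarrow> D \<le> 0" and "fst (l n) < E n \<Longrightarrow> 0 \<le> D"
proof -
  have feas: "feasible E n (l n)" using NE n by (simp add: is_NE_def)
  have gain: "0 \<le> D * d + K * d\<^sup>2" if "- fst (l n) \<le> d" "d \<le> E n - fst (l n)" for d
  proof -
    have "feasible E n (fst (l n) + d, snd (l n) - d)" using feas that by (auto simp: feasible_def)
    then show ?thesis using NE n shift[of d] by (force simp: is_NE_def)
  qed
  show "0 < fst (l n) \<Longrightarrow> D \<le> 0"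
    using feas by (intro slope_nonpos_if_min_from_left[OF K]) (auto simp: feasible_def intro: gain)
  show "fst (l n) < E n \<Longrightarrow> 0 \<le> D"
  proof -
    assume "fst (l n) < E n"
    moreover have "0 \<le> (- D) * d + K * d\<^sup>2" if "- (E n - fst (l n)) \<le> d" "d \<le> 0" for d
      using gain[of "- d"] that feas by (simp add: feasible_def)
    ultimately have "- D \<le> 0"
      by (intro slope_nonpos_if_min_from_left[OF K, of "E n - fst (l n)"]) auto
    then show "0 \<le> D" by simp
  qed
qed

text \<open>The marginal cost of user n at own load x n and aggregate load P is written relative to a
  feasible profile u at which it vanishes. If P > Q, a user with x n > u n would have positive
  marginal cost, so x \<le> u pointwise and P \<le> Q; symmetrically if P < Q.\<close>

lemma aggregate_eq_of_first_order_conditions: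
  fixes x u e a b :: "'i \<Rightarrow> real"
  assumes "finite S" and x: "sum x S = P" and u: "sum u S = Q"
    and u_bounds: "\<And>n. n \<in> S \<Longrightarrow> 0 \<le> u n \<and> u n \<le> e n"
    and coeffs: "\<And>n. n \<in> S \<Longrightarrow> 0 \<le> a n \<and> 0 \<le> b n \<and> 0 < a n + b n"
    and lower: "\<And>n. n \<in> S \<Longrightarrow> 0 < x n \<Longrightarrow> a n * (P - Q) + b n * (x n - u n) \<le> 0"
    and upper: "\<And>n. n \<in> S \<Longrightarrow> x n < e n \<Longrightarrow> 0 \<le> a n * (P - Q) + b n * (x n - u n)"
  shows "P = Q"
proof (rule ccontr)
  have pos: "0 < a n * p + b n * y" if "n \<in> S" "0 < p" "0 < y" for n p y
  proof -
    have "0 \<le> a n * p" "0 \<le> b n * y" "0 < a n * p \<or> 0 < b n * y"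
      using coeffs[OF \<open>n \<in> S\<close>] that by (auto simp: zero_less_mult_iff)
    then show ?thesis by linarith
  qed
  assume "P \<noteq> Q"
  then consider "Q < P" | "P < Q" by linarith
  then show False
  proof cases
    case 1
    have "x n \<le> u n" if "n \<in> S" for n
    proof (rule ccontr)
      assume "\<not> x n \<le> u n"
      then have "0 < a n * (P - Q) + b n * (x n - u n)" using pos[OF that] 1 by simp
      moreover have "a n * (P - Q) + b n * (x n - u n) \<le> 0"
        using lower[OF that] u_bounds[OF that] \<open>\<not> x n \<le> u n\<close> by simp
      ultimately show False by simp
    qed
    then have "P \<le> Q" using x u by (metis sum_mono)
    with 1 show False by simp
  next
    case 2
    have "u n \<le> x n" if "n \<in> S" for n
    proof (rule ccontr)
      assume "\<not> u n \<le> x n"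
      then have "0 < a n * (Q - P) + b n * (u n - x n)" using pos[OF that] 2 by simp
      moreover have "0 \<le> a n * (P - Q) + b n * (x n - u n)"
        using upper[OF that] u_bounds[OF that] \<open>\<not> u n \<le> x n\<close> by simp
      ultimately show False by (simp add: algebra_simps)
    qed
    then have "Q \<le> P" using x u by (metis sum_mono)
    with 2 show False by simp
  qed
qed

lemma cost_DP_shift:
  assumes "n \<in> {1..N}"
  shows "cost_DP \<alpha> N E lhat (l(n := (fst (l n) + d, snd (l n) - d))) n - cost_DP \<alpha> N E lhat l n
    = ((1 - \<alpha>) * (E n / total_energy N E) * (2 * (loadP N l - loadO N l))
        + \<alpha> * (2 * (fst (l n) - fst (lhat n)) - 2 * (snd (l n) - snd (lhat n)))) * d
      + ((1 - \<alpha>) * (E n / total_energy N E) * 2 + 2 * \<alpha>) * d\<^sup>2"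
  unfolding cost_DP_def bill_DP_def utility_def loadP_fun_upd[OF assms] loadO_fun_upd[OF assms]
  by (simp add: power2_eq_square algebra_simps add_divide_distrib diff_divide_distrib)

lemma cost_HP_shift:
  assumes "n \<in> {1..N}"
  shows "cost_HP \<alpha> N lhat (l(n := (fst (l n) + d, snd (l n) - d))) n - cost_HP \<alpha> N lhat l n
    = ((1 - \<alpha>) * (loadP N l + fst (l n) - loadO N l - snd (l n))
        + \<alpha> * (2 * (fst (l n) - fst (lhat n)) - 2 * (snd (l n) - snd (lhat n)))) * d
      + 2 * d\<^sup>2"
  unfolding cost_HP_def bill_HP_def utility_def loadP_fun_upd[OF assms] loadO_fun_upd[OF assms]
  by (simp add: power2_eq_square algebra_simps)

lemma loadP_at_NE_DP:
  assumes N: "1 \<le> N" and Epos: "\<forall>n\<in>{1..N}. 0 < E n"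
    and hat_feas: "\<forall>n\<in>{1..N}. feasible E n (lhat n)"
    and hat_peak: "loadO N lhat \<le> loadP N lhat"
    and cond: "\<forall>n\<in>{1..N}. loadP N lhat / total_energy N E \<le> fst (lhat n) / E n + 1/2"
    and \<alpha>: "0 \<le> \<alpha>" "\<alpha> \<le> 1"
    and NE: "is_NE (cost_DP \<alpha> N E lhat) N E l"
  shows "loadP N l = total_energy N E / 2 + \<alpha> * (loadP N lhat - loadO N lhat) / 2"
proof -
  define T where "T = total_energy N E"
  define \<Delta> where "\<Delta> = loadP N lhat - loadO N lhat"
  define Q where "Q = T / 2 + \<alpha> * \<Delta> / 2"
  define u where "u n = fst (lhat n) - (1 - \<alpha>) * (E n / T) * \<Delta> / 2" for n
  have T: "0 < T" unfolding T_def using N Epos by (rule total_energy_pos)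
  have \<Delta>: "0 \<le> \<Delta>" using hat_peak by (simp add: \<Delta>_def)
  have hatP: "loadP N lhat = (T + \<Delta>) / 2"
    using loadO_eq_total_energy_minus_loadP[OF hat_feas] by (simp add: T_def \<Delta>_def)
  have l_feas: "\<forall>n\<in>{1..N}. feasible E n (l n)" using NE by (simp add: is_NE_def)
  have "loadP N l = Q"
  proof (rule aggregate_eq_of_first_order_conditions
      [where S = "{1..N}" and x = "\<lambda>n. fst (l n)" and u = u and e = E
        and a = "\<lambda>n. 4 * (1 - \<alpha>) * (E n / T)" and b = "\<lambda>_. 4 * \<alpha>"])
    have "sum u {1..N} = loadP N lhat - (1 - \<alpha>) * \<Delta> / 2 * ((\<Sum>n\<in>{1..N}. E n) / T)"
      by (simp add: u_def loadP_def sum_subtractf sum_distrib_left sum_divide_distrib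
          mult.commute mult.left_commute)
    also have "\<dots> = loadP N lhat - (1 - \<alpha>) * \<Delta> / 2"
      using T by (simp add: T_def total_energy_def)
    finally show "sum u {1..N} = Q" by (simp add: hatP Q_def field_simps)
  next
    fix n assume n: "n \<in> {1..N}"
    have En: "0 < E n" using Epos n by simp
    have "feasible E n (lhat n)" "feasible E n (l n)" using hat_feas l_feas n by auto
    then have hat_n: "0 \<le> fst (lhat n)" "fst (lhat n) \<le> E n" "snd (lhat n) = E n - fst (lhat n)"
      and l_n: "snd (l n) = E n - fst (l n)"
      by (auto simp: feasible_def)
    have "(T + \<Delta>) / 2 / T \<le> fst (lhat n) / E n + 1/2" using cond n by (simp add: hatP T_def)
    then have "E n * \<Delta> / (2 * T) \<le> fst (lhat n)" using En T by (simp add: field_simps)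
    moreover have "(1 - \<alpha>) * (E n * \<Delta> / (2 * T)) \<le> E n * \<Delta> / (2 * T)"
      using \<alpha> En T \<Delta> by (intro mult_left_le_one_le) auto
    moreover have "0 \<le> (1 - \<alpha>) * (E n / T) * \<Delta>" using \<alpha> En T \<Delta> by simp
    ultimately show "0 \<le> u n \<and> u n \<le> E n" using hat_n by (simp add: u_def field_simps)
    have w: "0 \<le> (1 - \<alpha>) * (E n / T)" "0 < (1 - \<alpha>) * (E n / T) + \<alpha>"
      using \<alpha> En T by (cases "\<alpha> = 1"; simp add: add_pos_nonneg)+
    then show "0 \<le> 4 * (1 - \<alpha>) * (E n / T) \<and> 0 \<le> 4 * \<alpha> \<and> 0 < 4 * (1 - \<alpha>) * (E n / T) + 4 * \<alpha>"
      using \<alpha> by linarith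
    have "(1 - \<alpha>) * (E n / T) * 2 + 2 * \<alpha> = 2 * ((1 - \<alpha>) * (E n / T) + \<alpha>)" by simp
    with w have K: "0 < (1 - \<alpha>) * (E n / T) * 2 + 2 * \<alpha>" by linarith
    have marginal: "(1 - \<alpha>) * (E n / total_energy N E) * (2 * (loadP N l - loadO N l))
        + \<alpha> * (2 * (fst (l n) - fst (lhat n)) - 2 * (snd (l n) - snd (lhat n)))
      = 4 * (1 - \<alpha>) * (E n / T) * (loadP N l - Q) + 4 * \<alpha> * (fst (l n) - u n)"
      using T unfolding loadO_eq_total_energy_minus_loadP[OF l_feas] l_n hat_n(3)
      by (simp add: T_def Q_def u_def field_simps)
    have "cost_DP \<alpha> N E lhat (l(n := (fst (l n) + d, snd (l n) - d))) n - cost_DP \<alpha> N E lhat l n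
      = (4 * (1 - \<alpha>) * (E n / T) * (loadP N l - Q) + 4 * \<alpha> * (fst (l n) - u n)) * d
        + ((1 - \<alpha>) * (E n / T) * 2 + 2 * \<alpha>) * d\<^sup>2" for d
      using cost_DP_shift[OF n, of \<alpha> E lhat l d] unfolding marginal by (simp add: T_def)
    from is_NE_first_order[OF NE n K this]
    show "0 < fst (l n) \<Longrightarrow> 4 * (1 - \<alpha>) * (E n / T) * (loadP N l - Q) + 4 * \<alpha> * (fst (l n) - u n) \<le> 0"
      and "fst (l n) < E n \<Longrightarrow> 0 \<le> 4 * (1 - \<alpha>) * (E n / T) * (loadP N l - Q) + 4 * \<alpha> * (fst (l n) - u n)"
      by simp_all
  qed (simp_all add: loadP_def)
  then show ?thesis by (simp add: Q_def T_def \<Delta>_def)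
qed

lemma phi_denominator_ge_two:
  assumes "1 \<le> N" "\<alpha> \<le> 1"
  shows "2 \<le> (1 + \<alpha>) + (1 - \<alpha>) * real N"
proof -
  have "(1 - \<alpha>) * 1 \<le> (1 - \<alpha>) * real N" using assms by (intro mult_left_mono) auto
  then show ?thesis by simp
qed

lemma phi_times_denominator:
  assumes "1 \<le> N" "\<alpha> \<le> 1"
  shows "phi N \<alpha> * ((1 + \<alpha>) + (1 - \<alpha>) * real N) = 2 * \<alpha>"
  using phi_denominator_ge_two[OF assms] by (simp add: phi_def)

lemma phi_nonneg:
  assumes "1 \<le> N" "0 \<le> \<alpha>" "\<alpha> \<le> 1"
  shows "0 \<le> phi N \<alpha>"
  using phi_denominator_ge_two[OF assms(1,3)] assms(2) by (simp add: phi_def)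

lemma one_minus_alpha_phi_le:
  assumes N: "1 \<le> N" and \<alpha>: "0 \<le> \<alpha>" "\<alpha> \<le> 1" and h: "0 \<le> h" and e: "0 \<le> e"
    and \<Delta>: "\<Delta> \<le> 2 * (real N - 1) * h + e"
  shows "(1 - \<alpha>) * (phi N \<alpha> * \<Delta>) \<le> 4 * \<alpha> * h + (1 - \<alpha>) * e"
proof -
  define m where "m = real N - 1"
  define den where "den = (1 + \<alpha>) + (1 - \<alpha>) * real N"
  have den: "2 \<le> den" unfolding den_def using N \<alpha>(2) by (rule phi_denominator_ge_two)
  have den_m: "den = 2 + (1 - \<alpha>) * m" by (simp add: den_def m_def algebra_simps)
  have "den * ((1 - \<alpha>) * (phi N \<alpha> * \<Delta>)) = (1 - \<alpha>) * \<Delta> * (phi N \<alpha> * den)"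
    by (simp add: algebra_simps)
  also have "\<dots> = (1 - \<alpha>) * (2 * \<alpha> * \<Delta>)"
    using phi_times_denominator[OF N \<alpha>(2)] by (simp add: den_def)
  also have "\<dots> \<le> (1 - \<alpha>) * (2 * \<alpha> * (2 * m * h + e))"
    using \<Delta> \<alpha> by (intro mult_left_mono) (auto simp: m_def)
  also have "\<dots> = (1 - \<alpha>) * m * (4 * \<alpha> * h) + 2 * \<alpha> * ((1 - \<alpha>) * e)"
    by (simp add: algebra_simps)
  also have "\<dots> \<le> den * (4 * \<alpha> * h) + den * ((1 - \<alpha>) * e)"
  proof (rule add_mono)
    show "(1 - \<alpha>) * m * (4 * \<alpha> * h) \<le> den * (4 * \<alpha> * h)"
      unfolding den_m using \<alpha> h by (intro mult_right_mono) auto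
    show "2 * \<alpha> * ((1 - \<alpha>) * e) \<le> den * ((1 - \<alpha>) * e)"
      using den \<alpha> e by (intro mult_right_mono) auto
  qed
  finally show ?thesis using den by (simp add: distrib_left[symmetric] mult_le_cancel_left_pos)
qed

lemma loadP_at_NE_HP:
  assumes N: "1 \<le> N" and Epos: "\<forall>n\<in>{1..N}. 0 < E n"
    and hat_feas: "\<forall>n\<in>{1..N}. feasible E n (lhat n)"
    and hat_peak: "loadO N lhat \<le> loadP N lhat"
    and cond: "\<forall>n\<in>{1..N}. (loadP N lhat - loadO N lhat) - E n \<le> 2 * (real N - 1) * fst (lhat n)"
    and \<alpha>: "0 \<le> \<alpha>" "\<alpha> \<le> 1"
    and NE: "is_NE (cost_HP \<alpha> N lhat) N E l"
  shows "loadP N l = total_energy N E / 2 + phi N \<alpha> * (loadP N lhat - loadO N lhat) / 2"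
proof -
  define T where "T = total_energy N E"
  define \<Delta> where "\<Delta> = loadP N lhat - loadO N lhat"
  define \<phi> where "\<phi> = phi N \<alpha>"
  define Q where "Q = T / 2 + \<phi> * \<Delta> / 2"
  define u where "u n = (4 * \<alpha> * fst (lhat n) + (1 - \<alpha>) * E n - (1 - \<alpha>) * (\<phi> * \<Delta>)) / (2 + 2 * \<alpha>)" for n
  have \<alpha>2: "0 < 2 + 2 * \<alpha>" using \<alpha> by simp
  have \<phi>\<Delta>: "0 \<le> \<phi> * \<Delta>" using phi_nonneg[OF N \<alpha>] hat_peak by (simp add: \<phi>_def \<Delta>_def)
  have hatP: "loadP N lhat = (T + \<Delta>) / 2"
    using loadO_eq_total_energy_minus_loadP[OF hat_feas] by (simp add: T_def \<Delta>_def)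
  have l_feas: "\<forall>n\<in>{1..N}. feasible E n (l n)" using NE by (simp add: is_NE_def)
  have "loadP N l = Q"
  proof (rule aggregate_eq_of_first_order_conditions
      [where S = "{1..N}" and x = "\<lambda>n. fst (l n)" and u = u and e = E
        and a = "\<lambda>_. 2 * (1 - \<alpha>)" and b = "\<lambda>_. 2 + 2 * \<alpha>"])
    have "sum u {1..N} = (4 * \<alpha> * loadP N lhat + (1 - \<alpha>) * T - real N * ((1 - \<alpha>) * (\<phi> * \<Delta>))) / (2 + 2 * \<alpha>)"
      by (simp add: u_def loadP_def T_def total_energy_def sum_divide_distrib[symmetric]
          sum_subtractf sum.distrib sum_distrib_left)
    also have "\<dots> = ((2 + 2 * \<alpha>) * Q + \<Delta> * (2 * \<alpha> - \<phi> * ((1 + \<alpha>) + (1 - \<alpha>) * real N))) / (2 + 2 * \<alpha>)"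
      by (simp add: hatP Q_def algebra_simps)
    also have "\<dots> = Q"
      using \<alpha>2 phi_times_denominator[OF N \<alpha>(2)] by (simp add: \<phi>_def)
    finally show "sum u {1..N} = Q" .
  next
    fix n assume n: "n \<in> {1..N}"
    have En: "0 < E n" using Epos n by simp
    have "feasible E n (lhat n)" "feasible E n (l n)" using hat_feas l_feas n by auto
    then have hat_n: "0 \<le> fst (lhat n)" "fst (lhat n) \<le> E n" "snd (lhat n) = E n - fst (lhat n)"
      and l_n: "snd (l n) = E n - fst (l n)"
      by (auto simp: feasible_def)
    have "\<Delta> \<le> 2 * (real N - 1) * fst (lhat n) + E n" using bspec[OF cond n] by (simp add: \<Delta>_def)
    then have "(1 - \<alpha>) * (\<phi> * \<Delta>) \<le> 4 * \<alpha> * fst (lhat n) + (1 - \<alpha>) * E n"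
      unfolding \<phi>_def using hat_n En by (intro one_minus_alpha_phi_le[OF N \<alpha>]) auto
    moreover have "4 * \<alpha> * fst (lhat n) + (1 - \<alpha>) * E n \<le> (2 + 2 * \<alpha>) * E n + (1 - \<alpha>) * (\<phi> * \<Delta>)"
    proof -
      have "\<alpha> * fst (lhat n) \<le> \<alpha> * E n" using hat_n(2) \<alpha>(1) by (rule mult_left_mono)
      moreover have "\<alpha> * E n \<le> E n" using \<alpha> En by (intro mult_left_le_one_le) auto
      moreover have "0 \<le> (1 - \<alpha>) * (\<phi> * \<Delta>)" using \<alpha> \<phi>\<Delta> by simp
      ultimately show ?thesis by (simp add: algebra_simps)
    qed
    ultimately show "0 \<le> u n \<and> u n \<le> E n" using \<alpha>2 by (simp add: u_def field_simps)
    show "0 \<le> 2 * (1 - \<alpha>) \<and> 0 \<le> 2 + 2 * \<alpha> \<and> 0 < 2 * (1 - \<alpha>) + (2 + 2 * \<alpha>)" using \<alpha> by simp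
    have marginal: "(1 - \<alpha>) * (loadP N l + fst (l n) - loadO N l - snd (l n))
        + \<alpha> * (2 * (fst (l n) - fst (lhat n)) - 2 * (snd (l n) - snd (lhat n)))
      = 2 * (1 - \<alpha>) * (loadP N l - Q) + (2 + 2 * \<alpha>) * (fst (l n) - u n)"
      using \<alpha>2 unfolding loadO_eq_total_energy_minus_loadP[OF l_feas] l_n hat_n(3)
      by (simp add: T_def Q_def u_def field_simps)
    have "cost_HP \<alpha> N lhat (l(n := (fst (l n) + d, snd (l n) - d))) n - cost_HP \<alpha> N lhat l n
      = (2 * (1 - \<alpha>) * (loadP N l - Q) + (2 + 2 * \<alpha>) * (fst (l n) - u n)) * d + 2 * d\<^sup>2" for d
      using cost_HP_shift[OF n, of \<alpha> lhat l d] unfolding marginal .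
    from is_NE_first_order[OF NE n _ this]
    show "0 < fst (l n) \<Longrightarrow> 2 * (1 - \<alpha>) * (loadP N l - Q) + (2 + 2 * \<alpha>) * (fst (l n) - u n) \<le> 0"
      and "fst (l n) < E n \<Longrightarrow> 0 \<le> 2 * (1 - \<alpha>) * (loadP N l - Q) + (2 + 2 * \<alpha>) * (fst (l n) - u n)"
      by simp_all
  qed (simp_all add: loadP_def)
  then show ?thesis by (simp add: Q_def T_def \<Delta>_def \<phi>_def)
qed

theorem corollary3:
  fixes N :: nat and E :: "nat \<Rightarrow> real" and lhat :: profile
  assumes N: "N \<ge> 1"
    and Epos: "\<forall>n\<in>{1..N}. E n > 0"
    and hat_feas: "\<forall>n\<in>{1..N}. feasible E n (lhat n)"
    and peak: "loadP N lhat \<ge> total_energy N E / 2"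
    and offpeak: "total_energy N E / 2 \<ge> loadO N lhat"
  shows
    "((\<forall>n\<in>{1..N}. fst (lhat n) / E n + 1/2 \<ge> loadP N lhat / total_energy N E) \<longrightarrow>
       (\<forall>\<alpha>\<in>{0..1}. \<forall>l. is_NE (cost_DP \<alpha> N E lhat) N E l \<longrightarrow>
          loadP N l = total_energy N E / 2 + \<alpha> * (loadP N lhat - loadO N lhat) / 2))
     \<and>
     ((\<forall>n\<in>{1..N}. 2 * (real N - 1) * fst (lhat n) \<ge> (loadP N lhat - loadO N lhat) - E n) \<longrightarrow>
       (\<forall>\<alpha>\<in>{0..1}. \<forall>l. is_NE (cost_HP \<alpha> N lhat) N E l \<longrightarrow>
          loadP N l = total_energy N E / 2 + phi N \<alpha> * (loadP N lhat - loadO N lhat) / 2))"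
proof -
  have hat_peak: "loadO N lhat \<le> loadP N lhat" using peak offpeak by linarith
  show ?thesis
  proof (intro conjI impI ballI allI)
    fix \<alpha> :: real and l
    assume "\<forall>n\<in>{1..N}. fst (lhat n) / E n + 1/2 \<ge> loadP N lhat / total_energy N E"
      and "\<alpha> \<in> {0..1}" and "is_NE (cost_DP \<alpha> N E lhat) N E l"
    then show "loadP N l = total_energy N E / 2 + \<alpha> * (loadP N lhat - loadO N lhat) / 2"
      by (intro loadP_at_NE_DP[OF N Epos hat_feas hat_peak]) auto
  next
    fix \<alpha> :: real and l
    assume "\<forall>n\<in>{1..N}. 2 * (real N - 1) * fst (lhat n) \<ge> (loadP N lhat - loadO N lhat) - E n"
      and "\<alpha> \<in> {0..1}" and "is_NE (cost_HP \<alpha> N lhat) N E l"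
    then show "loadP N l = total_energy N E / 2 + phi N \<alpha> * (loadP N lhat - loadO N lhat) / 2"
      by (intro loadP_at_NE_HP[OF N Epos hat_feas hat_peak]) auto
  qed
qed

end
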